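(* On the open set $\Omega\subset\mathbb{R}^3$ where $u,v,w$ are pairwise distinct, consider the system $$u'=\frac{1}{u-w},\qquad v'=\frac{1}{v-w},\qquad w'=\frac1{w-u}+\frac1{w-v},$$ written $\mathbf{u}'=\mathbf{U}(\mathbf{u})$. Define $$P_{n1}(\mathbf{u})=\frac{2}{3(u-v)^2(v-w)(w-u)}\begin{pmatrix}0&1&-1\\-1&0&1\\1&-1&0\end{pmatrix},\qquad H_n(\mathbf{u})=\frac14(u+v-2w)(u-v)^3,$$ $$P_{n2}(\mathbf{u})=\frac16\frac{u-v}{(v-w)(w-u)}\begin{pmatrix}0&2&1\\-2&0&-1\\-1&1&0\end{pmatrix}+\frac12\Big[\frac1{w-u}-\frac1{v-w}\Big]\begin{pmatrix}0&0&-1\\0&0&-1\\1&1&0\end{pmatrix},$$ and $H^{(1)}(\mathbf{u})=u+v+w$. Then $P_{n1}$ and $P_{n2}$ are compatible Poisson matrices on $\Omega$ and $$\mathbf{u}'=P_{n1}(\mathbf{u})\nabla H_n(\mathbf{u})=P_{n2}(\mathbf{u})\nabla H^{(1)}(\mathbf{u}).$$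
   Context: A smooth skew-symmetric matrix-valued function $P$ on an open subset of $\mathbb{R}^3$ is a Poisson matrix if the bracket $\{f,g\}=(\nabla f)^{T}P\,\nabla g$ satisfies the Jacobi identity; two Poisson matrices are compatible if every linear combination of them is again a Poisson matrix. The system describes two bodies at $u,v$ that do not interact with each other but each interact with a third body at $w$. *)

theory Defs
  imports "HOL-Analysis.Analysis"
begin

type_synonym pt = "real ^ 3"
type_synonym mat3 = "real ^ 3 ^ 3"

definition partial :: "3 \<Rightarrow> (pt \<Rightarrow> real) \<Rightarrow> pt \<Rightarrow> real" where
  "partial i f x = frechet_derivative f (at x) (axis i 1)"

definition grad :: "(pt \<Rightarrow> real) \<Rightarrow> pt \<Rightarrow> pt" where
  "grad f x = (\<chi> i. partial i f x)"

fun Ck_on :: "nat \<Rightarrow> pt set \<Rightarrow> (pt \<Rightarrow> real) \<Rightarrow> bool" where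
  "Ck_on 0 S f = continuous_on S f"
| "Ck_on (Suc n) S f = (f differentiable_on S \<and> continuous_on S f \<and> (\<forall>i. Ck_on n S (partial i f)))"

definition smooth_on :: "pt set \<Rightarrow> (pt \<Rightarrow> real) \<Rightarrow> bool" where
  "smooth_on S f \<longleftrightarrow> (\<forall>n. Ck_on n S f)"

definition pbracket :: "(pt \<Rightarrow> mat3) \<Rightarrow> (pt \<Rightarrow> real) \<Rightarrow> (pt \<Rightarrow> real) \<Rightarrow> pt \<Rightarrow> real" where
  "pbracket P f g x = grad f x \<bullet> (P x *v grad g x)"

definition poisson_matrix :: "pt set \<Rightarrow> (pt \<Rightarrow> mat3) \<Rightarrow> bool" where
  "poisson_matrix S P \<longleftrightarrow>
     (\<forall>i j. smooth_on S (\<lambda>x. P x $ i $ j)) \<and>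
     (\<forall>x\<in>S. transpose (P x) = - P x) \<and>
     (\<forall>f g h. smooth_on S f \<and> smooth_on S g \<and> smooth_on S h \<longrightarrow>
        (\<forall>x\<in>S. pbracket P f (pbracket P g h) x + pbracket P g (pbracket P h f) x
               + pbracket P h (pbracket P f g) x = 0))"

definition compatible_poisson :: "pt set \<Rightarrow> (pt \<Rightarrow> mat3) \<Rightarrow> (pt \<Rightarrow> mat3) \<Rightarrow> bool" where
  "compatible_poisson S P Q \<longleftrightarrow> (\<forall>a b :: real. poisson_matrix S (\<lambda>x. a *\<^sub>R P x + b *\<^sub>R Q x))"

definition Omega :: "pt set" where
  "Omega = {x. x$1 \<noteq> x$2 \<and> x$2 \<noteq> x$3 \<and> x$3 \<noteq> x$1}"

definition Ufield :: "pt \<Rightarrow> pt" where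
  "Ufield x = (let u = x$1; v = x$2; w = x$3 in
     vector [1/(u-w), 1/(v-w), 1/(w-u) + 1/(w-v)])"

definition Pn1 :: "pt \<Rightarrow> mat3" where
  "Pn1 x = (let u = x$1; v = x$2; w = x$3 in
     (2 / (3 * (u-v)^2 * (v-w) * (w-u))) *\<^sub>R
       vector [vector [0, 1, -1], vector [-1, 0, 1], vector [1, -1, 0]])"

definition Hn :: "pt \<Rightarrow> real" where
  "Hn x = (let u = x$1; v = x$2; w = x$3 in (1/4) * (u + v - 2*w) * (u-v)^3)"

definition Pn2 :: "pt \<Rightarrow> mat3" where
  "Pn2 x = (let u = x$1; v = x$2; w = x$3 in
     ((1/6) * ((u-v) / ((v-w) * (w-u)))) *\<^sub>R
       vector [vector [0, 2, 1], vector [-2, 0, -1], vector [-1, 1, 0]]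
     + ((1/2) * (1/(w-u) - 1/(v-w))) *\<^sub>R
       vector [vector [0, 0, -1], vector [0, 0, -1], vector [1, 1, 0]])"

definition H1 :: "pt \<Rightarrow> real" where
  "H1 x = x$1 + x$2 + x$3"

end

theory Submission
  imports Defs
begin

text \<open>Both matrices are rational in u, v, w with denominators vanishing only off Omega, so their
  entries are smooth there. For a skew-symmetric 3 x 3 matrix P the second-derivative terms of the
  Jacobiator cancel by the symmetry of second derivatives, and the Jacobi identity reduces to the
  vanishing of one first-order expression in the entries of P, the Jacobiator of the coordinate
  functions. For the pencil a Pn1 + b Pn2 this expression is 3ab phi (6 alpha / (u - v) -
  1 / ((v - w)(w - u))) with Pn1 = phi M1 and Pn2 = alpha M2 + beta M3, and it vanishes identically;
  this gives both Poisson properties and compatibility at once.\<close>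

lemma partial_eq_derivative:
  "(f has_derivative f') (at x) \<Longrightarrow> partial i f x = f' (axis i 1)"
  unfolding partial_def using frechet_derivative_at by metis

lemma partial_transform_open:
  assumes "open S" "x \<in> S" "\<And>y. y \<in> S \<Longrightarrow> f y = g y"
  shows "partial i f x = partial i g x"
proof -
  have "(f has_derivative f') (at x) \<longleftrightarrow> (g has_derivative f') (at x)" for f'
    using has_derivative_transform_within_open[of f f' x UNIV S g]
      has_derivative_transform_within_open[of g f' x UNIV S f] assms by auto
  then show ?thesis unfolding partial_def frechet_derivative_def by simp
qed

lemma sum_mult_axis [simp]: "(\<Sum>l\<in>UNIV. c l * axis i (1::real) $ l) = c i"
  by (simp add: axis_def if_distrib sum.delta cong: if_cong)

lemma has_derivative_partials:
  assumes "f differentiable (at x)"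
  shows "(f has_derivative (\<lambda>h. \<Sum>l\<in>UNIV. partial l f x * h $ l)) (at x)"
proof -
  let ?D = "frechet_derivative f (at x)"
  have D: "(f has_derivative ?D) (at x)"
    using assms frechet_derivative_works by blast
  have "linear ?D"
    using D has_derivative_linear by blast
  have "?D = (\<lambda>h. \<Sum>l\<in>UNIV. partial l f x * h $ l)"
  proof
    fix h :: pt
    have "h = (\<Sum>l\<in>UNIV. h $ l *\<^sub>R axis l 1)"
      by (simp add: vec_eq_iff axis_def sum.delta' if_distrib cong: if_cong)
    then have "?D h = ?D (\<Sum>l\<in>UNIV. h $ l *\<^sub>R axis l 1)"
      by simp
    also have "\<dots> = (\<Sum>l\<in>UNIV. h $ l * ?D (axis l 1))"
      using \<open>linear ?D\<close> by (simp add: linear_sum linear_scale)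
    finally show "?D h = (\<Sum>l\<in>UNIV. partial l f x * h $ l)"
      unfolding partial_def by (simp add: mult.commute)
  qed
  with D show ?thesis
    by simp
qed

lemma partial_minus:
  "f differentiable (at x) \<Longrightarrow> partial i (\<lambda>y. - f y) x = - partial i f x"
  using partial_eq_derivative[OF has_derivative_minus[OF has_derivative_partials]] by simp

lemma has_real_derivative_partial_line:
  assumes "f differentiable (at (c + t *\<^sub>R axis i 1))"
  shows "((\<lambda>s. f (c + s *\<^sub>R axis i 1)) has_real_derivative partial i f (c + t *\<^sub>R axis i 1)) (at t)"
proof -
  have "((\<lambda>s. c + s *\<^sub>R axis i (1::real)) has_derivative (\<lambda>s. s *\<^sub>R axis i 1)) (at t)"
    by (auto intro!: derivative_eq_intros)
  from has_derivative_compose[OF this has_derivative_partials[OF assms]]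
  show ?thesis
    unfolding has_field_derivative_def
    by (rule has_derivative_eq_rhs) (simp add: fun_eq_iff axis_def if_distrib sum.delta cong: if_cong)
qed

lemma partial_eq_line_derivative:
  assumes "f differentiable (at x)" "((\<lambda>s. f (x + s *\<^sub>R axis i 1)) has_real_derivative D) (at 0)"
  shows "partial i f x = D"
  using has_real_derivative_partial_line[of f x 0 i] assms DERIV_unique by fastforce

inductive rational_on :: "pt set \<Rightarrow> (pt \<Rightarrow> real) \<Rightarrow> bool" for S where
  const: "rational_on S (\<lambda>x. c)"
| coord: "rational_on S (\<lambda>x. x $ i)"
| add: "rational_on S f \<Longrightarrow> rational_on S g \<Longrightarrow> rational_on S (\<lambda>x. f x + g x)"
| mult: "rational_on S f \<Longrightarrow> rational_on S g \<Longrightarrow> rational_on S (\<lambda>x. f x * g x)"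
| inverse: "rational_on S f \<Longrightarrow> (\<forall>x\<in>S. f x \<noteq> 0) \<Longrightarrow> rational_on S (\<lambda>x. inverse (f x))"
| cong: "rational_on S g \<Longrightarrow> (\<forall>x\<in>S. f x = g x) \<Longrightarrow> rational_on S f"

lemma rational_on_diff:
  assumes "rational_on S f" "rational_on S g"
  shows "rational_on S (\<lambda>x. f x - g x)"
proof -
  have "rational_on S (\<lambda>x. f x + (-1) * g x)"
    by (intro rational_on.add rational_on.mult rational_on.const assms)
  then show ?thesis
    by (rule rational_on.cong) simp
qed

lemma rational_on_divide:
  assumes "rational_on S f" "rational_on S g" "\<forall>x\<in>S. g x \<noteq> 0"
  shows "rational_on S (\<lambda>x. f x / g x)"
proof -
  have "rational_on S (\<lambda>x. f x * inverse (g x))"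
    by (intro rational_on.mult rational_on.inverse assms)
  then show ?thesis
    by (rule rational_on.cong) (simp add: divide_inverse)
qed

lemma rational_on_power: "rational_on S f \<Longrightarrow> rational_on S (\<lambda>x. f x ^ n)"
proof (induction n)
  case 0
  then show ?case using rational_on.const[of S 1] by simp
next
  case (Suc n)
  then have "rational_on S (\<lambda>x. f x * f x ^ n)"
    by (intro rational_on.mult)
  then show ?case by simp
qed

lemma rational_on_differentiable:
  "rational_on S f \<Longrightarrow> open S \<Longrightarrow> x \<in> S \<Longrightarrow> f differentiable (at x)"
proof (induction arbitrary: x rule: rational_on.induct)
  case (coord i)
  then show ?case by (simp add: bounded_linear_imp_differentiable bounded_linear_vec_nth)
next
  case (cong g f)
  then have "(g has_derivative frechet_derivative g (at x)) (at x)"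
    using frechet_derivative_works by blast
  then have "(f has_derivative frechet_derivative g (at x)) (at x)"
    using has_derivative_transform_within_open[of g _ x UNIV S f] cong.hyps(2) cong.prems by auto
  then show ?case unfolding differentiable_def by blast
qed (simp_all add: differentiable_add differentiable_mult differentiable_inverse)

lemma rational_on_partial: "rational_on S f \<Longrightarrow> open S \<Longrightarrow> rational_on S (partial i f)"
proof (induction rule: rational_on.induct)
  case (const c)
  have "partial i (\<lambda>x. c) x = 0" for x
    by (subst partial_eq_derivative[of _ "\<lambda>_. 0"]) auto
  then show ?case using rational_on.const[of S 0] by simp
next
  case (coord j)
  have "partial i (\<lambda>x. x $ j) x = axis i 1 $ j" for x
    by (rule partial_eq_derivative) (simp add: bounded_linear_imp_has_derivative bounded_linear_vec_nth)
  then show ?case using rational_on.const[of S "axis i 1 $ j"] by simp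
next
  case (add f g)
  have "partial i (\<lambda>x. f x + g x) x = partial i f x + partial i g x" if "x \<in> S" for x
    using partial_eq_derivative[OF has_derivative_add[OF
        has_derivative_partials[OF rational_on_differentiable[OF add(1,5) that]]
        has_derivative_partials[OF rational_on_differentiable[OF add(2,5) that]]], of i]
    by simp
  then show ?case
    by (intro rational_on.cong[OF rational_on.add[OF add(3,4)[OF add(5)]]]) simp
next
  case (mult f g)
  have "partial i (\<lambda>x. f x * g x) x = f x * partial i g x + partial i f x * g x" if "x \<in> S" for x
    using partial_eq_derivative[OF has_derivative_mult[OF
        has_derivative_partials[OF rational_on_differentiable[OF mult(1,5) that]]
        has_derivative_partials[OF rational_on_differentiable[OF mult(2,5) that]]], of i]
    by simp
  moreover have "rational_on S (\<lambda>x. f x * partial i g x + partial i f x * g x)"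
    using mult by (intro rational_on.add rational_on.mult)
  ultimately show ?case
    by (simp add: rational_on.cong)
next
  case (inverse f)
  have "partial i (\<lambda>x. inverse (f x)) x = - (inverse (f x) * (inverse (f x) * partial i f x))"
    if "x \<in> S" for x
    using partial_eq_derivative[OF Deriv.has_derivative_inverse[OF _
        has_derivative_partials[OF rational_on_differentiable[OF inverse(1,4) that]]], of i]
      inverse(2) that
    by simp
  moreover have "rational_on S (\<lambda>x. (-1) * (inverse (f x) * (inverse (f x) * partial i f x)))"
    using inverse by (intro rational_on.mult rational_on.inverse rational_on.const)
  ultimately show ?case
    by (simp add: rational_on.cong)
next
  case (cong g f)
  have "\<forall>x\<in>S. partial i f x = partial i g x"
    using partial_transform_open[OF cong(4)] cong(2) by blast
  then show ?case
    by (rule rational_on.cong[OF cong(3)[OF cong(4)]])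
qed

lemma rational_on_Ck: "rational_on S f \<Longrightarrow> open S \<Longrightarrow> Ck_on n S f"
proof (induction n arbitrary: f)
  case 0
  then show ?case
    using rational_on_differentiable
    by (simp add: continuous_at_imp_continuous_on differentiable_imp_continuous_within)
next
  case (Suc n)
  then have "\<forall>x\<in>S. f differentiable (at x)"
    using rational_on_differentiable by blast
  then show ?case
    using Suc rational_on_partial
    by (simp add: differentiable_at_imp_differentiable_on continuous_at_imp_continuous_on
        differentiable_imp_continuous_within)
qed

lemma rational_on_smooth: "rational_on S f \<Longrightarrow> open S \<Longrightarrow> smooth_on S f"
  unfolding smooth_on_def using rational_on_Ck by blast

lemma Ck_on_2_at:
  assumes "Ck_on 2 S f" "open S" "x \<in> S"
  shows "f differentiable (at x)" "partial i f differentiable (at x)"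
    and "isCont (partial j (partial i f)) x"
  using assms by (simp_all add: numeral_2_eq_2 differentiable_on_eq_differentiable_at
      continuous_on_eq_continuous_at)

lemma mixed_second_difference:
  fixes f :: "pt \<Rightarrow> real"
  assumes "d > 0"
    and diff: "\<And>s t. 0 \<le> s \<Longrightarrow> s \<le> d \<Longrightarrow> 0 \<le> t \<Longrightarrow> t \<le> d \<Longrightarrow>
      f differentiable (at (x + s *\<^sub>R axis i 1 + t *\<^sub>R axis j 1)) \<and>
      partial i f differentiable (at (x + s *\<^sub>R axis i 1 + t *\<^sub>R axis j 1))"
  obtains s t where "0 < s" "s < d" "0 < t" "t < d"
    and "f (x + d *\<^sub>R axis i 1 + d *\<^sub>R axis j 1) - f (x + d *\<^sub>R axis i 1)
         - f (x + d *\<^sub>R axis j 1) + f x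
       = d * d * partial j (partial i f) (x + s *\<^sub>R axis i 1 + t *\<^sub>R axis j 1)"
proof -
  define p where "p s t = x + s *\<^sub>R axis i 1 + t *\<^sub>R axis j 1" for s t
  have p_i: "p s t = (x + t *\<^sub>R axis j 1) + s *\<^sub>R axis i 1"
   and p_j: "p s t = (x + s *\<^sub>R axis i 1) + t *\<^sub>R axis j 1" for s t
    by (simp_all add: p_def algebra_simps)
  define G where "G s = f (p s d) - f (p s 0)" for s
  have "DERIV G s :> partial i f (p s d) - partial i f (p s 0)" if "0 \<le> s" "s \<le> d" for s
    unfolding G_def p_i
    using that \<open>d > 0\<close> diff[of s d] diff[of s 0]
    by (intro DERIV_diff has_real_derivative_partial_line) (simp_all add: p_def algebra_simps)
  from MVT2[OF \<open>d > 0\<close> this] obtain s where s: "0 < s" "s < d"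
    and G: "G d - G 0 = d * (partial i f (p s d) - partial i f (p s 0))"
    by auto
  have "DERIV (\<lambda>t. partial i f (p s t)) t :> partial j (partial i f) (p s t)"
    if "0 \<le> t" "t \<le> d" for t
    unfolding p_j
    using that s diff[of s t] by (intro has_real_derivative_partial_line) (simp add: p_def)
  from MVT2[OF \<open>d > 0\<close> this] obtain t where t: "0 < t" "t < d"
    and "partial i f (p s d) - partial i f (p s 0) = d * partial j (partial i f) (p s t)"
    by auto
  with G have "f (p d d) - f (p d 0) - f (p 0 d) + f (p 0 0) = d * d * partial j (partial i f) (p s t)"
    by (simp add: G_def)
  with s t that show ?thesis
    by (simp add: p_def)
qed

lemma partial_commute:
  assumes "open S" "x \<in> S" "Ck_on 2 S f"
  shows "partial i (partial j f) x = partial j (partial i f) x"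
proof (rule ccontr)
  define A where "A = partial j (partial i f) x"
  define B where "B = partial i (partial j f) x"
  define \<epsilon> where "\<epsilon> = \<bar>A - B\<bar> / 2"
  assume "partial i (partial j f) x \<noteq> partial j (partial i f) x"
  then have "\<epsilon> > 0"
    by (simp add: \<epsilon>_def A_def B_def)
  obtain r where "r > 0" "ball x r \<subseteq> S"
    using assms(1,2) open_contains_ball by blast
  obtain r\<^sub>A where "r\<^sub>A > 0" and r\<^sub>A: "\<And>y. dist y x < r\<^sub>A \<Longrightarrow> dist (partial j (partial i f) y) A < \<epsilon>"
    using Ck_on_2_at(3)[OF assms(3,1,2)] \<open>\<epsilon> > 0\<close> unfolding continuous_at_eps_delta A_def by blast
  obtain r\<^sub>B where "r\<^sub>B > 0" and r\<^sub>B: "\<And>y. dist y x < r\<^sub>B \<Longrightarrow> dist (partial i (partial j f) y) B < \<epsilon>"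
    using Ck_on_2_at(3)[OF assms(3,1,2)] \<open>\<epsilon> > 0\<close> unfolding continuous_at_eps_delta B_def by blast
  define d where "d = min r (min r\<^sub>A r\<^sub>B) / 4"
  define p where "p s t = x + s *\<^sub>R axis i 1 + t *\<^sub>R axis j 1" for s t
  have "d > 0"
    using \<open>r > 0\<close> \<open>r\<^sub>A > 0\<close> \<open>r\<^sub>B > 0\<close> by (simp add: d_def)
  have close: "dist (p s t) x < min r (min r\<^sub>A r\<^sub>B)" if "0 \<le> s" "s \<le> d" "0 \<le> t" "t \<le> d" for s t
  proof -
    have "dist (p s t) x \<le> norm (s *\<^sub>R axis i (1::real)) + norm (t *\<^sub>R axis j (1::real))"
      unfolding p_def dist_norm
      using norm_triangle_ineq[of "s *\<^sub>R axis i (1::real)" "t *\<^sub>R axis j 1"] by simp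
    also have "\<dots> < min r (min r\<^sub>A r\<^sub>B)"
      using that \<open>d > 0\<close> by (simp add: d_def)
    finally show ?thesis .
  qed
  have swap: "p s t = x + t *\<^sub>R axis j 1 + s *\<^sub>R axis i 1" for s t
    by (simp add: p_def algebra_simps)
  have diff: "f differentiable (at (p s t)) \<and> partial k f differentiable (at (p s t))"
    if "0 \<le> s" "s \<le> d" "0 \<le> t" "t \<le> d" for s t k
  proof -
    have "p s t \<in> S"
      using close[OF that] \<open>ball x r \<subseteq> S\<close> by (auto simp: dist_commute)
    then show ?thesis
      using Ck_on_2_at(1,2)[OF assms(3,1)] by blast
  qed
  obtain s t where "0 < s" "s < d" "0 < t" "t < d"
    and st: "f (p d d) - f (p d 0) - f (p 0 d) + f (p 0 0) = d * d * partial j (partial i f) (p s t)"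
    by (rule mixed_second_difference[OF \<open>d > 0\<close>]) (use diff that in \<open>simp_all add: p_def\<close>)
  obtain s' t' where "0 < s'" "s' < d" "0 < t'" "t' < d"
    and st': "f (p d d) - f (p 0 d) - f (p d 0) + f (p 0 0) = d * d * partial i (partial j f) (p t' s')"
  proof (rule mixed_second_difference[OF \<open>d > 0\<close>])
    fix s t
    assume "0 < s" "s < d" "0 < t" "t < d"
      and "f (x + d *\<^sub>R axis j 1 + d *\<^sub>R axis i 1) - f (x + d *\<^sub>R axis j 1)
        - f (x + d *\<^sub>R axis i 1) + f x
        = d * d * partial i (partial j f) (x + s *\<^sub>R axis j 1 + t *\<^sub>R axis i 1)"
    then show thesis
      by (intro that[of s t]) (simp_all add: p_def add_ac)
  qed (use diff in \<open>simp add: swap p_def\<close>)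
  have "d * d * partial j (partial i f) (p s t) = d * d * partial i (partial j f) (p t' s')"
    using st st' by linarith
  then have "partial j (partial i f) (p s t) = partial i (partial j f) (p t' s')"
    using \<open>d > 0\<close> by simp
  moreover have "dist (partial j (partial i f) (p s t)) A < \<epsilon>"
    using r\<^sub>A close[of s t] \<open>0 < s\<close> \<open>s < d\<close> \<open>0 < t\<close> \<open>t < d\<close> by simp
  moreover have "dist (partial i (partial j f) (p t' s')) B < \<epsilon>"
    using r\<^sub>B close[of t' s'] \<open>0 < s'\<close> \<open>s' < d\<close> \<open>0 < t'\<close> \<open>t' < d\<close> by simp
  ultimately have "\<bar>A - B\<bar> < 2 * \<epsilon>"
    by (simp add: dist_real_def)
  then show False
    by (simp add: \<epsilon>_def)
qed

lemma pbracket_eq_sum: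
  "pbracket P g h x = (\<Sum>a\<in>UNIV. partial a g x * (\<Sum>b\<in>UNIV. P x $ a $ b * partial b h x))"
  by (simp add: pbracket_def grad_def inner_vec_def matrix_vector_mult_def)

lemma partial_pbracket:
  assumes "\<And>a. partial a g differentiable (at x)" "\<And>b. partial b h differentiable (at x)"
    and "\<And>a b. (\<lambda>y. P y $ a $ b) differentiable (at x)"
  shows "partial l (pbracket P g h) x =
    (\<Sum>a\<in>UNIV. partial a g x * (\<Sum>b\<in>UNIV. P x $ a $ b * partial l (partial b h) x
                                           + partial l (\<lambda>y. P y $ a $ b) x * partial b h x)
             + partial l (partial a g) x * (\<Sum>b\<in>UNIV. P x $ a $ b * partial b h x))"
proof -
  have "pbracket P g h = (\<lambda>y. \<Sum>a\<in>UNIV. partial a g y * (\<Sum>b\<in>UNIV. P y $ a $ b * partial b h y))"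
    by (simp add: fun_eq_iff pbracket_eq_sum)
  moreover have "((\<lambda>y. \<Sum>a\<in>UNIV. partial a g y * (\<Sum>b\<in>UNIV. P y $ a $ b * partial b h y))
    has_derivative (\<lambda>v. \<Sum>a\<in>UNIV. partial a g x *
        (\<Sum>b\<in>UNIV. P x $ a $ b * (\<Sum>l\<in>UNIV. partial l (partial b h) x * v $ l)
                  + (\<Sum>l\<in>UNIV. partial l (\<lambda>y. P y $ a $ b) x * v $ l) * partial b h x)
      + (\<Sum>l\<in>UNIV. partial l (partial a g) x * v $ l) * (\<Sum>b\<in>UNIV. P x $ a $ b * partial b h x)))
    (at x)"
    by (intro has_derivative_sum has_derivative_mult has_derivative_partials assms)
  ultimately show ?thesis
    using partial_eq_derivative by simp
qed

text \<open>For skew-symmetric P this is the Jacobiator of the coordinate functions x1, x2, x3.\<close>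

definition jacobi_defect :: "(pt \<Rightarrow> mat3) \<Rightarrow> pt \<Rightarrow> real" where
  "jacobi_defect P x = (\<Sum>l\<in>UNIV. P x $ 1 $ l * partial l (\<lambda>y. P y $ 2 $ 3) x
                                 + P x $ 2 $ l * partial l (\<lambda>y. P y $ 3 $ 1) x
                                 + P x $ 3 $ l * partial l (\<lambda>y. P y $ 1 $ 2) x)"

lemma pbracket_jacobi:
  assumes S: "open S" "x \<in> S"
    and diff: "\<And>a b. \<forall>y\<in>S. (\<lambda>y. P y $ a $ b) differentiable (at y)"
    and skew: "\<forall>y\<in>S. transpose (P y) = - P y"
    and defect: "jacobi_defect P x = 0"
    and f: "Ck_on 2 S f" and g: "Ck_on 2 S g" and h: "Ck_on 2 S h"
  shows "pbracket P f (pbracket P g h) x + pbracket P g (pbracket P h f) x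
       + pbracket P h (pbracket P f g) x = 0"
proof -
  have diff_x: "(\<lambda>y. P y $ a $ b) differentiable (at x)" for a b
    using diff S by blast
  have skew_entry: "P y $ b $ a = - P y $ a $ b" if "y \<in> S" for a b y
  proof -
    have "transpose (P y) $ a $ b = (- P y) $ a $ b"
      using skew that by simp
    then show ?thesis
      by (simp add: transpose_def)
  qed
  have partial_skew: "partial l (\<lambda>y. P y $ b $ a) x = - partial l (\<lambda>y. P y $ a $ b) x" for a b l
  proof -
    have "partial l (\<lambda>y. P y $ b $ a) x = partial l (\<lambda>y. - P y $ a $ b) x"
      by (rule partial_transform_open[OF S]) (rule skew_entry)
    then show ?thesis
      using partial_minus[OF diff_x] by simp
  qed
  have diag: "P x $ a $ a = 0" "partial l (\<lambda>y. P y $ a $ a) x = 0" for a l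
    using skew_entry[OF S(2), of a a] partial_skew[of l a a] by simp_all
  have below_diag: "P x $ 2 $ 1 = - P x $ 1 $ 2" "P x $ 3 $ 1 = - P x $ 1 $ 3" "P x $ 3 $ 2 = - P x $ 2 $ 3"
    "partial l (\<lambda>y. P y $ 2 $ 1) x = - partial l (\<lambda>y. P y $ 1 $ 2) x"
    "partial l (\<lambda>y. P y $ 3 $ 1) x = - partial l (\<lambda>y. P y $ 1 $ 3) x"
    "partial l (\<lambda>y. P y $ 3 $ 2) x = - partial l (\<lambda>y. P y $ 2 $ 3) x" for l
    using skew_entry[OF S(2), of 1 2] skew_entry[OF S(2), of 1 3] skew_entry[OF S(2), of 2 3]
      partial_skew[of l 1 2] partial_skew[of l 1 3] partial_skew[of l 2 3] by simp_all
  have symmetric_second: "partial 2 (partial 1 k) x = partial 1 (partial 2 k) x"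
    "partial 3 (partial 1 k) x = partial 1 (partial 3 k) x"
    "partial 3 (partial 2 k) x = partial 2 (partial 3 k) x" if "Ck_on 2 S k" for k
    using partial_commute[OF S that] by simp_all
  have expand: "pbracket P k (pbracket P m n) x = (\<Sum>i\<in>UNIV. partial i k x * (\<Sum>j\<in>UNIV. P x $ i $ j *
      (\<Sum>a\<in>UNIV. partial a m x * (\<Sum>b\<in>UNIV. P x $ a $ b * partial j (partial b n) x
                                   + partial j (\<lambda>y. P y $ a $ b) x * partial b n x)
                + partial j (partial a m) x * (\<Sum>b\<in>UNIV. P x $ a $ b * partial b n x))))"
    if "Ck_on 2 S m" "Ck_on 2 S n" for k m n
    using Ck_on_2_at(2)[OF that(1) S] Ck_on_2_at(2)[OF that(2) S]
    by (simp add: pbracket_eq_sum[of P k] partial_pbracket diff_x)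
  have defect_expanded: "P x $ 1 $ 2 * partial 2 (\<lambda>y. P y $ 2 $ 3) x + P x $ 1 $ 3 * partial 3 (\<lambda>y. P y $ 2 $ 3) x
      + P x $ 1 $ 2 * partial 1 (\<lambda>y. P y $ 1 $ 3) x - P x $ 2 $ 3 * partial 3 (\<lambda>y. P y $ 1 $ 3) x
      - P x $ 1 $ 3 * partial 1 (\<lambda>y. P y $ 1 $ 2) x - P x $ 2 $ 3 * partial 2 (\<lambda>y. P y $ 1 $ 2) x = 0"
    using defect by (simp add: jacobi_defect_def sum_3 diag below_diag algebra_simps)
  show ?thesis
    using defect_expanded unfolding expand[OF g h] expand[OF h f] expand[OF f g]
    by (simp only: sum_3 diag below_diag symmetric_second[OF f] symmetric_second[OF g]
        symmetric_second[OF h]) algebra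
qed

lemma poisson_matrixI:
  assumes "open S"
    and smooth: "\<And>i j. smooth_on S (\<lambda>x. P x $ i $ j)"
    and skew: "\<forall>x\<in>S. transpose (P x) = - P x"
    and defect: "\<forall>x\<in>S. jacobi_defect P x = 0"
  shows "poisson_matrix S P"
  unfolding poisson_matrix_def
proof (intro conjI allI impI ballI smooth skew[rule_format])
  fix f g h x
  assume "smooth_on S f \<and> smooth_on S g \<and> smooth_on S h" and "x \<in> S"
  moreover have "\<forall>y\<in>S. (\<lambda>y. P y $ i $ j) differentiable (at y)" for i j
    using smooth[of i j] \<open>open S\<close> unfolding smooth_on_def
    by (metis Ck_on.simps(2) One_nat_def differentiable_on_eq_differentiable_at)
  ultimately show "pbracket P f (pbracket P g h) x + pbracket P g (pbracket P h f) x
      + pbracket P h (pbracket P f g) x = 0"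
    using pbracket_jacobi[OF \<open>open S\<close>] skew defect unfolding smooth_on_def by blast
qed

definition phi :: "pt \<Rightarrow> real" where
  "phi x = 2 / (3 * (x$1 - x$2)^2 * (x$2 - x$3) * (x$3 - x$1))"

definition alpha :: "pt \<Rightarrow> real" where
  "alpha x = (1/6) * ((x$1 - x$2) / ((x$2 - x$3) * (x$3 - x$1)))"

definition beta :: "pt \<Rightarrow> real" where
  "beta x = (1/2) * (1 / (x$3 - x$1) - 1 / (x$2 - x$3))"

definition M1 :: mat3 where "M1 = vector [vector [0, 1, -1], vector [-1, 0, 1], vector [1, -1, 0]]"
definition M2 :: mat3 where "M2 = vector [vector [0, 2, 1], vector [-2, 0, -1], vector [-1, 1, 0]]"
definition M3 :: mat3 where "M3 = vector [vector [0, 0, -1], vector [0, 0, -1], vector [1, 1, 0]]"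

lemma Pn1_eq: "Pn1 x = phi x *\<^sub>R M1"
  by (simp add: Pn1_def phi_def M1_def Let_def)

lemma Pn2_eq: "Pn2 x = alpha x *\<^sub>R M2 + beta x *\<^sub>R M3"
  by (simp add: Pn2_def alpha_def beta_def M2_def M3_def Let_def)

lemma Omega_neq:
  "x \<in> Omega \<Longrightarrow> x$1 \<noteq> x$2 \<and> x$2 \<noteq> x$1 \<and> x$2 \<noteq> x$3 \<and> x$3 \<noteq> x$2 \<and> x$3 \<noteq> x$1 \<and> x$1 \<noteq> x$3"
  by (auto simp: Omega_def)

lemma open_Omega: "open Omega"
  unfolding Omega_def by (intro open_Collect_conj open_Collect_neq continuous_intros)

lemma rational_on_Omega:
  "rational_on Omega phi" "rational_on Omega alpha" "rational_on Omega beta" "rational_on Omega Hn"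
  unfolding phi_def alpha_def beta_def Hn_def Let_def
  by (intro rational_on_divide rational_on.mult rational_on.add rational_on_power rational_on_diff
      rational_on.const rational_on.coord; auto simp: Omega_def)+

lemma vec_nth_add_axis:
  fixes x :: pt
  shows "(x + s *\<^sub>R axis 1 1) $ 1 = x$1 + s" "(x + s *\<^sub>R axis 1 1) $ 2 = x$2" "(x + s *\<^sub>R axis 1 1) $ 3 = x$3"
    and "(x + s *\<^sub>R axis 2 1) $ 1 = x$1" "(x + s *\<^sub>R axis 2 1) $ 2 = x$2 + s" "(x + s *\<^sub>R axis 2 1) $ 3 = x$3"
    and "(x + s *\<^sub>R axis 3 1) $ 1 = x$1" "(x + s *\<^sub>R axis 3 1) $ 2 = x$2" "(x + s *\<^sub>R axis 3 1) $ 3 = x$3 + s"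
  by (simp_all add: axis_def)

lemma partial_phi:
  assumes "x \<in> Omega"
  shows "partial 1 phi x = phi x * (-2 * inverse (x$1 - x$2) + inverse (x$3 - x$1))"
    and "partial 2 phi x = phi x * (2 * inverse (x$1 - x$2) - inverse (x$2 - x$3))"
    and "partial 3 phi x = phi x * (inverse (x$2 - x$3) - inverse (x$3 - x$1))"
  using Omega_neq[OF assms]
  apply -
  by (rule partial_eq_line_derivative[OF rational_on_differentiable[OF rational_on_Omega(1) open_Omega assms]];
      simp only: phi_def vec_nth_add_axis, (rule derivative_eq_intros refl | simp)+,
      simp add: divide_simps power2_eq_square, (simp add: algebra_simps)?)+

lemma partial_alpha:
  assumes "x \<in> Omega"
  shows "partial 1 alpha x = alpha x * (inverse (x$1 - x$2) + inverse (x$3 - x$1))"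
    and "partial 2 alpha x = alpha x * (- inverse (x$1 - x$2) - inverse (x$2 - x$3))"
    and "partial 3 alpha x = alpha x * (inverse (x$2 - x$3) - inverse (x$3 - x$1))"
  using Omega_neq[OF assms]
  apply -
  by (rule partial_eq_line_derivative[OF rational_on_differentiable[OF rational_on_Omega(2) open_Omega assms]];
      simp only: alpha_def vec_nth_add_axis, (rule derivative_eq_intros refl | simp)+,
      simp add: divide_simps power2_eq_square, (simp add: algebra_simps)?)+

lemma partial_beta:
  assumes "x \<in> Omega"
  shows "partial 1 beta x = inverse (x$3 - x$1) * inverse (x$3 - x$1) / 2"
    and "partial 2 beta x = inverse (x$2 - x$3) * inverse (x$2 - x$3) / 2"
    and "partial 3 beta x = - (inverse (x$3 - x$1) * inverse (x$3 - x$1) + inverse (x$2 - x$3) * inverse (x$2 - x$3)) / 2"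
  using Omega_neq[OF assms]
  apply -
  by (rule partial_eq_line_derivative[OF rational_on_differentiable[OF rational_on_Omega(3) open_Omega assms]];
      simp only: beta_def vec_nth_add_axis, (rule derivative_eq_intros refl | simp)+,
      simp add: divide_simps power2_eq_square, (simp add: algebra_simps)?)+

lemma partial_Hn:
  assumes "x \<in> Omega"
  shows "partial 1 Hn x = (1/4) * (x$1 - x$2)^3 + (3/4) * (x$1 + x$2 - 2 * x$3) * (x$1 - x$2)^2"
    and "partial 2 Hn x = (1/4) * (x$1 - x$2)^3 - (3/4) * (x$1 + x$2 - 2 * x$3) * (x$1 - x$2)^2"
    and "partial 3 Hn x = - (1/2) * (x$1 - x$2)^3"
  apply -
  by (rule partial_eq_line_derivative[OF rational_on_differentiable[OF rational_on_Omega(4) open_Omega assms]];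
      simp only: Hn_def Let_def vec_nth_add_axis, (rule derivative_eq_intros refl | simp)+,
      (simp add: algebra_simps power2_eq_square power3_eq_cube)?)+

lemma grad_H1: "grad H1 x = (\<chi> i. 1)"
proof -
  have "(H1 has_derivative (\<lambda>h. h$1 + h$2 + h$3)) (at x)"
    unfolding H1_def by (intro has_derivative_add bounded_linear_imp_has_derivative bounded_linear_vec_nth)
  from partial_eq_derivative[OF this] show ?thesis
    unfolding grad_def by (simp add: vec_eq_iff forall_3 axis_def)
qed

lemma pencil_entry:
  "(a *\<^sub>R Pn1 x + b *\<^sub>R Pn2 x) $ i $ j = a * (phi x * M1$i$j) + b * (alpha x * M2$i$j + beta x * M3$i$j)"
  by (simp add: Pn1_eq Pn2_eq)

lemma rational_on_pencil_entry: "rational_on Omega (\<lambda>x. (a *\<^sub>R Pn1 x + b *\<^sub>R Pn2 x) $ i $ j)"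
  by (rule rational_on.cong[where g = "\<lambda>x. a * (phi x * M1$i$j) + b * (alpha x * M2$i$j + beta x * M3$i$j)"])
    (intro rational_on.add rational_on.mult rational_on.const rational_on_Omega, simp add: Pn1_eq Pn2_eq)

lemma partial_pencil_entry:
  assumes "x \<in> Omega"
  shows "partial l (\<lambda>y. (a *\<^sub>R Pn1 y + b *\<^sub>R Pn2 y) $ i $ j) x
    = a * (partial l phi x * M1$i$j) + b * (partial l alpha x * M2$i$j + partial l beta x * M3$i$j)"
proof -
  have "((\<lambda>y. a * (phi y * M1$i$j) + b * (alpha y * M2$i$j + beta y * M3$i$j)) has_derivative
     (\<lambda>h. a * ((\<Sum>l\<in>UNIV. partial l phi x * h $ l) * M1$i$j)
        + b * ((\<Sum>l\<in>UNIV. partial l alpha x * h $ l) * M2$i$j + (\<Sum>l\<in>UNIV. partial l beta x * h $ l) * M3$i$j)))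
     (at x)"
    using rational_on_Omega(1-3)[THEN rational_on_differentiable, OF open_Omega assms]
    by (intro has_derivative_add has_derivative_mult_right has_derivative_mult_left has_derivative_partials)
  moreover have "(\<lambda>y. (a *\<^sub>R Pn1 y + b *\<^sub>R Pn2 y) $ i $ j)
      = (\<lambda>y. a * (phi y * M1$i$j) + b * (alpha y * M2$i$j + beta y * M3$i$j))"
    by (simp add: fun_eq_iff Pn1_eq Pn2_eq)
  ultimately show ?thesis
    using partial_eq_derivative by simp
qed

lemma jacobi_defect_pencil:
  assumes "x \<in> Omega"
  shows "jacobi_defect (\<lambda>y. a *\<^sub>R Pn1 y + b *\<^sub>R Pn2 y) x = 0"
proof -
  define iA where "iA = inverse (x$1 - x$2)"
  define iB where "iB = inverse (x$2 - x$3)"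
  define iC where "iC = inverse (x$3 - x$1)"
  have "6 * ((1/6) * (A / (B * C))) * inverse A = inverse B * inverse C" if "A \<noteq> 0" for A B C :: real
    using that by (simp add: field_simps)
  moreover have "x$1 - x$2 \<noteq> 0"
    using Omega_neq[OF assms] by simp
  ultimately have "6 * alpha x * iA = iB * iC"
    unfolding alpha_def iA_def iB_def iC_def by blast
  moreover have "jacobi_defect (\<lambda>y. a *\<^sub>R Pn1 y + b *\<^sub>R Pn2 y) x
      = 3 * a * b * phi x * (6 * alpha x * iA - iB * iC)"
  proof -
    have beta_eq: "beta x = (1/2) * (iC - iB)"
      by (simp add: beta_def iB_def iC_def inverse_eq_divide)
    show ?thesis
      unfolding jacobi_defect_def sum_3 partial_pencil_entry[OF assms]
      unfolding pencil_entry partial_phi[OF assms] partial_alpha[OF assms] partial_beta[OF assms]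
      by (simp add: M1_def M2_def M3_def beta_eq flip: iA_def iB_def iC_def) (simp add: field_simps)
  qed
  ultimately show ?thesis
    by simp
qed

lemma poisson_matrix_pencil: "poisson_matrix Omega (\<lambda>x. a *\<^sub>R Pn1 x + b *\<^sub>R Pn2 x)"
proof (rule poisson_matrixI[OF open_Omega])
  show "smooth_on Omega (\<lambda>x. (a *\<^sub>R Pn1 x + b *\<^sub>R Pn2 x) $ i $ j)" for i j
    by (rule rational_on_smooth[OF rational_on_pencil_entry open_Omega])
  show "\<forall>x\<in>Omega. transpose (a *\<^sub>R Pn1 x + b *\<^sub>R Pn2 x) = - (a *\<^sub>R Pn1 x + b *\<^sub>R Pn2 x)"
    by (simp add: vec_eq_iff forall_3 transpose_def Pn1_eq Pn2_eq M1_def M2_def M3_def algebra_simps)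
  show "\<forall>x\<in>Omega. jacobi_defect (\<lambda>x. a *\<^sub>R Pn1 x + b *\<^sub>R Pn2 x) x = 0"
    using jacobi_defect_pencil by blast
qed

lemma Ufield_eq_Pn1_grad_Hn:
  assumes "x \<in> Omega"
  shows "Ufield x = Pn1 x *v grad Hn x"
  by (simp add: vec_eq_iff forall_3 matrix_vector_mult_def sum_3 grad_def partial_Hn[OF assms]
      Pn1_eq M1_def Ufield_def Let_def phi_def)
    (simp add: Omega_neq[OF assms] divide_simps power2_eq_square power3_eq_cube, (simp add: algebra_simps)?)

lemma Ufield_eq_Pn2_grad_H1:
  assumes "x \<in> Omega"
  shows "Ufield x = Pn2 x *v grad H1 x"
  by (simp add: vec_eq_iff forall_3 matrix_vector_mult_def sum_3 grad_H1 Pn2_eq M2_def M3_def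
      Ufield_def Let_def alpha_def beta_def)
    (simp add: Omega_neq[OF assms] divide_simps, (simp add: algebra_simps)?)

theorem mainTheorem7:
  shows "open Omega \<and> poisson_matrix Omega Pn1 \<and> poisson_matrix Omega Pn2 \<and>
         compatible_poisson Omega Pn1 Pn2 \<and>
         (\<forall>x\<in>Omega. Ufield x = Pn1 x *v grad Hn x \<and> Ufield x = Pn2 x *v grad H1 x)"
proof (intro conjI ballI)
  show "open Omega"
    by (rule open_Omega)
  show "poisson_matrix Omega Pn1"
    using poisson_matrix_pencil[of 1 0] by simp
  show "poisson_matrix Omega Pn2"
    using poisson_matrix_pencil[of 0 1] by simp
  show "compatible_poisson Omega Pn1 Pn2"
    unfolding compatible_poisson_def using poisson_matrix_pencil by blast
  fix x
  assume "x \<in> Omega"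
  then show "Ufield x = Pn1 x *v grad Hn x" "Ufield x = Pn2 x *v grad H1 x"
    by (rule Ufield_eq_Pn1_grad_Hn, rule Ufield_eq_Pn2_grad_H1)
qed

end
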